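(* Let $A$ be a finite direct product of elementary abelian groups, written additively, let $U$ be an $F$-relevant subgroup of $\mathrm{Aut}(A)$, and let $N(U) = N_{\mathrm{Aut}(A)}(U)$. For $\delta, \lambda \in Z^2(U,A)$ we have $G_\delta \cong G_\lambda$ if and only if there exists $g \in N(U)$ with $g([\delta]) = [\lambda]$ in $H^2(U,A)$.
   Context: $U$ acts on $A$ naturally (as a group of automorphisms), and $Z^2(U,A)$, $B^2(U,A)$, $H^2(U,A)=Z^2(U,A)/B^2(U,A)$ are the groups of $2$-cocycles, $2$-coboundaries and the second cohomology group for this action; $[\delta] = \delta + B^2(U,A)$. For $\delta\in Z^2(U,A)$, $G_\delta$ denotes the extension of $A$ by $U$ defined by $\delta$ (the group on the set $U\times A$ with multiplication twisted by $\delta$ in the standard way, containing $A$ as a normal subgroup with quotient $U$ acting on $A$ via the given action). The group $N(U)$ acts on $Z^2(U,A)$ by $(g(\delta))(u,v) = g\big(\delta(g^{-1}ug, g^{-1}vg)\big)$ for $g\in N(U)$, $u,v\in U$; this leaves $B^2(U,A)$ invariant and induces an action on $H^2(U,A)$ by $g([\delta]) = [g(\delta)]$. A subgroup $N \le \mathrm{Aut}(A)$ centralizes a series through $A$ if there is an $N$-invariant series $A = A_1 > \cdots > A_{l+1} = \{1\}$ with $N$ acting trivially on each $A_i/A_{i+1}$; $U\le\mathrm{Aut}(A)$ is $F$-relevant if no non-trivial normal subgroup of $U$ centralizes a series through $A$. *)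

theory Defs
  imports "HOL-Algebra.Algebra"
begin

definition elementary_abelian :: "('a, 'b) monoid_scheme \<Rightarrow> bool" where
  "elementary_abelian E \<longleftrightarrow> comm_group E \<and>
     (\<exists>p::nat. Factorial_Ring.prime p \<and> (\<forall>x\<in>carrier E. x [^]\<^bsub>E\<^esub> p = \<one>\<^bsub>E\<^esub>))"

definition fin_prod_elem_abelian :: "'a monoid \<Rightarrow> bool" where
  "fin_prod_elem_abelian A \<longleftrightarrow> comm_group A \<and>
     (\<exists>(k::nat) (H::nat \<Rightarrow> 'a set).
        (\<forall>i<k. subgroup (H i) A \<and> elementary_abelian (A\<lparr>carrier := H i\<rparr>)) \<and>
        (\<lambda>x\<in>carrier (product_group {..<k} (\<lambda>i. A\<lparr>carrier := H i\<rparr>)). finprod A x {..<k})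
          \<in> iso (product_group {..<k} (\<lambda>i. A\<lparr>carrier := H i\<rparr>)) A)"

definition centralizes_series :: "'a monoid \<Rightarrow> ('a \<Rightarrow> 'a) set \<Rightarrow> bool" where
  "centralizes_series A N \<longleftrightarrow>
     (\<exists>(l::nat) (S::nat \<Rightarrow> 'a set).
        S 1 = carrier A \<and> S (l + 1) = {\<one>\<^bsub>A\<^esub>} \<and>
        (\<forall>i\<in>{1..l+1}. subgroup (S i) A) \<and>
        (\<forall>i\<in>{1..l}. S (Suc i) \<subset> S i) \<and>
        (\<forall>n\<in>N. \<forall>i\<in>{1..l+1}. n ` S i \<subseteq> S i) \<and>
        (\<forall>n\<in>N. \<forall>i\<in>{1..l}. \<forall>a\<in>S i. n a \<otimes>\<^bsub>A\<^esub> inv\<^bsub>A\<^esub> a \<in> S (Suc i)))"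

definition F_relevant :: "'a monoid \<Rightarrow> ('a \<Rightarrow> 'a) set \<Rightarrow> bool" where
  "F_relevant A U \<longleftrightarrow>
     (\<forall>N. N \<lhd> ((AutoGroup A)\<lparr>carrier := U\<rparr>) \<and> N \<noteq> {\<one>\<^bsub>AutoGroup A\<^esub>}
          \<longrightarrow> \<not> centralizes_series A N)"

definition Z2 :: "'a monoid \<Rightarrow> ('a \<Rightarrow> 'a) set \<Rightarrow> (('a \<Rightarrow> 'a) \<Rightarrow> ('a \<Rightarrow> 'a) \<Rightarrow> 'a) set" where
  "Z2 A U = {\<delta>. (\<forall>u\<in>U. \<forall>v\<in>U. \<delta> u v \<in> carrier A) \<and>
     (\<forall>u\<in>U. \<forall>v\<in>U. \<forall>w\<in>U.
        u (\<delta> v w) \<otimes>\<^bsub>A\<^esub> \<delta> u (v \<otimes>\<^bsub>AutoGroup A\<^esub> w)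
        = \<delta> (u \<otimes>\<^bsub>AutoGroup A\<^esub> v) w \<otimes>\<^bsub>A\<^esub> \<delta> u v)}"

definition B2 :: "'a monoid \<Rightarrow> ('a \<Rightarrow> 'a) set \<Rightarrow> (('a \<Rightarrow> 'a) \<Rightarrow> ('a \<Rightarrow> 'a) \<Rightarrow> 'a) set" where
  "B2 A U = {\<beta>. \<exists>\<phi>. (\<forall>u\<in>U. \<phi> u \<in> carrier A) \<and>
     (\<forall>u\<in>U. \<forall>v\<in>U. \<beta> u v =
        u (\<phi> v) \<otimes>\<^bsub>A\<^esub> inv\<^bsub>A\<^esub> (\<phi> (u \<otimes>\<^bsub>AutoGroup A\<^esub> v)) \<otimes>\<^bsub>A\<^esub> \<phi> u)}"

definition cohomologous :: "'a monoid \<Rightarrow> ('a \<Rightarrow> 'a) set \<Rightarrow>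
    (('a \<Rightarrow> 'a) \<Rightarrow> ('a \<Rightarrow> 'a) \<Rightarrow> 'a) \<Rightarrow> (('a \<Rightarrow> 'a) \<Rightarrow> ('a \<Rightarrow> 'a) \<Rightarrow> 'a) \<Rightarrow> bool" where
  "cohomologous A U \<delta> \<mu> \<longleftrightarrow>
     (\<exists>\<beta>\<in>B2 A U. \<forall>u\<in>U. \<forall>v\<in>U. \<delta> u v = \<mu> u v \<otimes>\<^bsub>A\<^esub> \<beta> u v)"

definition cochain_act :: "'a monoid \<Rightarrow> ('a \<Rightarrow> 'a) \<Rightarrow>
    (('a \<Rightarrow> 'a) \<Rightarrow> ('a \<Rightarrow> 'a) \<Rightarrow> 'a) \<Rightarrow> (('a \<Rightarrow> 'a) \<Rightarrow> ('a \<Rightarrow> 'a) \<Rightarrow> 'a)" where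
  "cochain_act A g \<delta> = (\<lambda>u v. g (\<delta>
      (inv\<^bsub>AutoGroup A\<^esub> g \<otimes>\<^bsub>AutoGroup A\<^esub> u \<otimes>\<^bsub>AutoGroup A\<^esub> g)
      (inv\<^bsub>AutoGroup A\<^esub> g \<otimes>\<^bsub>AutoGroup A\<^esub> v \<otimes>\<^bsub>AutoGroup A\<^esub> g)))"

(* The extension G_\<delta>: the set U x A, where (u,a) stands for a\<cdot>s(u), with multiplication
   (u,a)(v,b) = (uv, a + u(b) + \<delta>(u,v)) *)
definition ext_group :: "'a monoid \<Rightarrow> ('a \<Rightarrow> 'a) set \<Rightarrow>
    (('a \<Rightarrow> 'a) \<Rightarrow> ('a \<Rightarrow> 'a) \<Rightarrow> 'a) \<Rightarrow> (('a \<Rightarrow> 'a) \<times> 'a) monoid" where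
  "ext_group A U \<delta> =
     \<lparr>carrier = U \<times> carrier A,
      monoid.mult = (\<lambda>(u, a) (v, b).
         (u \<otimes>\<^bsub>AutoGroup A\<^esub> v, a \<otimes>\<^bsub>A\<^esub> u b \<otimes>\<^bsub>A\<^esub> \<delta> u v)),
      one = (\<one>\<^bsub>AutoGroup A\<^esub>, inv\<^bsub>A\<^esub> (\<delta> \<one>\<^bsub>AutoGroup A\<^esub> \<one>\<^bsub>AutoGroup A\<^esub>))\<rparr>"

end

theory Submission
  imports Defs
begin

text \<open>
  If \<open>g\<close> normalizes \<open>U\<close> and \<open>g[\<delta>] = [\<lambda>]\<close>, then \<open>(v, a) \<mapsto> (g v g\<inverse>, g a)\<close> is an
  isomorphism \<open>G\<^sub>\<delta> \<cong> G\<^sub>g\<^sub>\<delta>\<close>, and shifting second coordinates by a cochain whose coboundary is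
  \<open>g\<delta> - \<lambda>\<close> gives \<open>G\<^sub>g\<^sub>\<delta> \<cong> G\<^sub>\<lambda>\<close>.

  Conversely, let \<open>\<phi> : G\<^sub>\<delta> \<cong> G\<^sub>\<lambda>\<close>. The image of \<open>A\<close> is an abelian normal subgroup \<open>B\<close> of
  \<open>G\<^sub>\<lambda>\<close>. Its projection \<open>N\<close> to \<open>U\<close> is normal in \<open>U\<close>, and for \<open>C = B \<inter> A\<close> every element
  of \<open>N\<close> acts trivially on \<open>C\<close> and on \<open>A/C\<close>; by F-relevance \<open>N = 1\<close>, so \<open>\<phi>(A) \<subseteq> A\<close>, with
  equality by finiteness. Hence \<open>\<phi>\<close> restricts to an automorphism \<open>g\<close> of \<open>A\<close>. Conjugation by
  \<open>(u, x)\<close> induces \<open>u\<close> on \<open>A\<close>, so \<open>\<phi>(u, x)\<close> induces \<open>g u g\<inverse>\<close> and \<open>g \<in> N(U)\<close>; the second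
  coordinates of \<open>\<phi>(g\<inverse> u g, 1)\<close> form a cochain exhibiting \<open>g[\<delta>] = [\<lambda>]\<close>.
\<close>

lemma AutoGroup_carrier: "carrier (AutoGroup A) = auto A"
  by (simp add: AutoGroup_def)

lemma AutoGroup_mult_apply:
  assumes "f \<in> carrier (AutoGroup A)" "h \<in> carrier (AutoGroup A)" "x \<in> carrier A"
  shows "(f \<otimes>\<^bsub>AutoGroup A\<^esub> h) x = f (h x)"
  using assms by (simp add: AutoGroup_def BijGroup_def auto_def compose_def)

lemma AutoGroup_one_apply: "x \<in> carrier A \<Longrightarrow> \<one>\<^bsub>AutoGroup A\<^esub> x = x"
  by (simp add: AutoGroup_def BijGroup_def)

lemma AutoGroup_eqI:
  assumes "f \<in> carrier (AutoGroup A)" "h \<in> carrier (AutoGroup A)"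
    and "\<And>x. x \<in> carrier A \<Longrightarrow> f x = h x"
  shows "f = h"
proof -
  have "f \<in> extensional (carrier A)" "h \<in> extensional (carrier A)"
    using assms(1,2) unfolding AutoGroup_carrier auto_def Bij_def by auto
  then show ?thesis using assms(3) by (rule extensionalityI)
qed

lemma AutoGroup_hom: "f \<in> carrier (AutoGroup A) \<Longrightarrow> f \<in> hom A A"
  unfolding AutoGroup_carrier auto_def by blast

lemma AutoGroup_apply_closed: "f \<in> carrier (AutoGroup A) \<Longrightarrow> x \<in> carrier A \<Longrightarrow> f x \<in> carrier A"
  by (rule hom_in_carrier[OF AutoGroup_hom])

lemma AutoGroup_apply_mult:
  "f \<in> carrier (AutoGroup A) \<Longrightarrow> x \<in> carrier A \<Longrightarrow> y \<in> carrier A \<Longrightarrow> f (x \<otimes>\<^bsub>A\<^esub> y) = f x \<otimes>\<^bsub>A\<^esub> f y"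
  by (simp add: hom_mult AutoGroup_hom)

lemma AutoGroup_memI:
  assumes "f \<in> hom A A" "bij_betw f (carrier A) (carrier A)" "f \<in> extensional (carrier A)"
  shows "f \<in> carrier (AutoGroup A)"
  using assms by (simp add: AutoGroup_carrier auto_def Bij_def)

context group
begin

lemma AutoGroup_apply_one: "f \<in> carrier (AutoGroup G) \<Longrightarrow> f \<one> = \<one>"
  by (rule hom_one[OF AutoGroup_hom is_group is_group])

lemma AutoGroup_apply_inv: "f \<in> carrier (AutoGroup G) \<Longrightarrow> x \<in> carrier G \<Longrightarrow> f (inv x) = inv (f x)"
  by (rule group_hom.hom_inv) (simp_all add: group_hom_def group_hom_axioms_def AutoGroup_hom is_group)

lemma AutoGroup_apply_inv_right:
  assumes "f \<in> carrier (AutoGroup G)" "x \<in> carrier G"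
  shows "f ((inv\<^bsub>AutoGroup G\<^esub> f) x) = x"
proof -
  interpret Aut: group "AutoGroup G" by (rule AutoGroup)
  have "f ((inv\<^bsub>AutoGroup G\<^esub> f) x) = (f \<otimes>\<^bsub>AutoGroup G\<^esub> inv\<^bsub>AutoGroup G\<^esub> f) x"
    using assms by (intro AutoGroup_mult_apply[symmetric]) auto
  then show ?thesis using assms by (simp add: AutoGroup_one_apply)
qed

lemma AutoGroup_apply_inv_left:
  assumes "f \<in> carrier (AutoGroup G)" "x \<in> carrier G"
  shows "(inv\<^bsub>AutoGroup G\<^esub> f) (f x) = x"
proof -
  interpret Aut: group "AutoGroup G" by (rule AutoGroup)
  have "(inv\<^bsub>AutoGroup G\<^esub> f) (f x) = (inv\<^bsub>AutoGroup G\<^esub> f \<otimes>\<^bsub>AutoGroup G\<^esub> f) x"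
    using assms by (intro AutoGroup_mult_apply[symmetric]) auto
  then show ?thesis using assms by (simp add: AutoGroup_one_apply)
qed

lemma AutoGroup_conj_apply:
  assumes "f \<in> carrier (AutoGroup G)" "h \<in> carrier (AutoGroup G)" "x \<in> carrier G"
  shows "(f \<otimes>\<^bsub>AutoGroup G\<^esub> h \<otimes>\<^bsub>AutoGroup G\<^esub> inv\<^bsub>AutoGroup G\<^esub> f) (f x) = f (h x)"
proof -
  interpret Aut: group "AutoGroup G" by (rule AutoGroup)
  show ?thesis
    using assms by (simp add: AutoGroup_mult_apply AutoGroup_apply_closed AutoGroup_apply_inv_left)
qed

lemma inv_mult_cancel_left: "x \<in> carrier G \<Longrightarrow> y \<in> carrier G \<Longrightarrow> inv x \<otimes> (x \<otimes> y) = y"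
  by (simp add: m_assoc[symmetric])

lemma mult_inv_cancel_left: "x \<in> carrier G \<Longrightarrow> y \<in> carrier G \<Longrightarrow> x \<otimes> (inv x \<otimes> y) = y"
  by (simp add: m_assoc[symmetric])

lemma conj_conj_inv: "g \<in> carrier G \<Longrightarrow> h \<in> carrier G \<Longrightarrow> inv g \<otimes> (g \<otimes> h \<otimes> inv g) \<otimes> g = h"
  by (simp add: m_assoc inv_mult_cancel_left)

lemma conj_inv_conj: "g \<in> carrier G \<Longrightarrow> h \<in> carrier G \<Longrightarrow> g \<otimes> (inv g \<otimes> h \<otimes> g) \<otimes> inv g = h"
  by (simp add: m_assoc mult_inv_cancel_left)

lemma conj_mult_distrib: "g \<in> carrier G \<Longrightarrow> h \<in> carrier G \<Longrightarrow> k \<in> carrier G \<Longrightarrow>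
   g \<otimes> (h \<otimes> k) \<otimes> inv g = (g \<otimes> h \<otimes> inv g) \<otimes> (g \<otimes> k \<otimes> inv g)"
  by (simp add: m_assoc inv_mult_cancel_left)

lemma normalizer_iff_conj_image:
  assumes "H \<subseteq> carrier G"
  shows "g \<in> normalizer G H \<longleftrightarrow> g \<in> carrier G \<and> (\<lambda>h. g \<otimes> h \<otimes> inv g) ` H = H"
proof -
  have "g <# H #> inv g = (\<lambda>h. g \<otimes> h \<otimes> inv g) ` H"
    unfolding l_coset_def r_coset_def by auto
  then show ?thesis using assms unfolding normalizer_def stabilizer_def by auto
qed

lemma normalizer_conj_closed:
  assumes "H \<subseteq> carrier G" "g \<in> normalizer G H" "h \<in> H"
  shows "g \<otimes> h \<otimes> inv g \<in> H" "inv g \<otimes> h \<otimes> g \<in> H"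
proof -
  show "g \<otimes> h \<otimes> inv g \<in> H" using assms normalizer_iff_conj_image by blast
  have "inv g \<in> normalizer G H"
    using subgroup.m_inv_closed[OF normalizer_imp_subgroup] assms(1,2) by blast
  moreover have "g \<in> carrier G" using assms(1,2) normalizer_iff_conj_image by blast
  ultimately show "inv g \<otimes> h \<otimes> g \<in> H" using assms(1,3) normalizer_iff_conj_image by fastforce
qed

end

lemma (in group_hom) subgroup_preimage:
  assumes "subgroup K H"
  shows "subgroup {x \<in> carrier G. h x \<in> K} G"
  using assms by (intro G.subgroupI) (auto simp: subgroup.one_closed subgroup.m_inv_closed subgroup.m_closed)

section \<open>Extensions by a group of automorphisms\<close>

locale aut_subgroup = comm_group A for A :: "'a monoid" (structure) +
  fixes U :: "('a \<Rightarrow> 'a) set"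
  assumes U_subgroup: "subgroup U (AutoGroup A)"
begin

sublocale Aut: group "AutoGroup A" by (rule AutoGroup)

lemma U_subset: "U \<subseteq> carrier (AutoGroup A)"
  by (rule subgroup.subset[OF U_subgroup])

lemma U_aut: "u \<in> U \<Longrightarrow> u \<in> carrier (AutoGroup A)"
  using U_subset by blast

lemma one_in_U: "\<one>\<^bsub>AutoGroup A\<^esub> \<in> U"
  by (rule subgroup.one_closed[OF U_subgroup])

lemma U_mult_closed: "u \<in> U \<Longrightarrow> v \<in> U \<Longrightarrow> u \<otimes>\<^bsub>AutoGroup A\<^esub> v \<in> U"
  by (rule subgroup.m_closed[OF U_subgroup])

lemma U_inv_closed: "u \<in> U \<Longrightarrow> inv\<^bsub>AutoGroup A\<^esub> u \<in> U"
  by (rule subgroup.m_inv_closed[OF U_subgroup])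

lemma U_apply_closed: "u \<in> U \<Longrightarrow> x \<in> carrier A \<Longrightarrow> u x \<in> carrier A"
  by (rule AutoGroup_apply_closed[OF U_aut])

lemma U_apply_mult: "u \<in> U \<Longrightarrow> x \<in> carrier A \<Longrightarrow> y \<in> carrier A \<Longrightarrow> u (x \<otimes> y) = u x \<otimes> u y"
  by (rule AutoGroup_apply_mult[OF U_aut])

lemma U_apply_inv: "u \<in> U \<Longrightarrow> x \<in> carrier A \<Longrightarrow> u (inv x) = inv (u x)"
  by (rule AutoGroup_apply_inv[OF U_aut])

lemma U_apply_one: "u \<in> U \<Longrightarrow> u \<one> = \<one>"
  by (rule AutoGroup_apply_one[OF U_aut])

lemma U_mult_apply: "u \<in> U \<Longrightarrow> v \<in> U \<Longrightarrow> x \<in> carrier A \<Longrightarrow> (u \<otimes>\<^bsub>AutoGroup A\<^esub> v) x = u (v x)"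
  by (rule AutoGroup_mult_apply[OF U_aut U_aut])

lemma ext_group_carrier: "carrier (ext_group A U \<mu>) = U \<times> carrier A"
  by (simp add: ext_group_def)

lemma ext_group_mult:
  "(u, a) \<otimes>\<^bsub>ext_group A U \<mu>\<^esub> (v, b) = (u \<otimes>\<^bsub>AutoGroup A\<^esub> v, a \<otimes> u b \<otimes> \<mu> u v)"
  by (simp add: ext_group_def)

lemma ext_group_iso_if_cohomologous:
  assumes lam: "\<And>u v. u \<in> U \<Longrightarrow> v \<in> U \<Longrightarrow> lam u v \<in> carrier A"
    and "cohomologous A U \<mu> lam"
  shows "ext_group A U \<mu> \<cong> ext_group A U lam"
proof -
  obtain p where p: "\<And>u. u \<in> U \<Longrightarrow> p u \<in> carrier A"
    and \<mu>: "\<And>u v. u \<in> U \<Longrightarrow> v \<in> U \<Longrightarrow>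
      \<mu> u v = lam u v \<otimes> (u (p v) \<otimes> inv (p (u \<otimes>\<^bsub>AutoGroup A\<^esub> v)) \<otimes> p u)"
    using assms(2) unfolding cohomologous_def B2_def by fastforce
  define \<Phi> where "\<Phi> = (\<lambda>(u, a). (u, a \<otimes> p u))"
  have "\<Phi> \<in> hom (ext_group A U \<mu>) (ext_group A U lam)"
  proof (rule homI)
    fix x y assume "x \<in> carrier (ext_group A U \<mu>)" "y \<in> carrier (ext_group A U \<mu>)"
    then obtain u a v b where x: "x = (u, a)" "u \<in> U" "a \<in> carrier A"
      and y: "y = (v, b)" "v \<in> U" "b \<in> carrier A" by (auto simp: ext_group_carrier)
    then show "\<Phi> (x \<otimes>\<^bsub>ext_group A U \<mu>\<^esub> y) = \<Phi> x \<otimes>\<^bsub>ext_group A U lam\<^esub> \<Phi> y"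
      by (simp add: \<Phi>_def ext_group_mult \<mu> U_apply_mult U_apply_closed U_mult_closed p lam m_ac)
  qed (auto simp: \<Phi>_def ext_group_carrier p)
  moreover have "bij_betw \<Phi> (carrier (ext_group A U \<mu>)) (carrier (ext_group A U lam))"
    by (rule bij_betw_byWitness[where f' = "\<lambda>(u, c). (u, c \<otimes> inv p u)"])
      (auto simp: \<Phi>_def ext_group_carrier p m_assoc)
  ultimately show ?thesis by (auto simp: is_iso_def iso_def)
qed

lemma ext_group_iso_cochain_act:
  assumes \<delta>: "\<And>u v. u \<in> U \<Longrightarrow> v \<in> U \<Longrightarrow> \<delta> u v \<in> carrier A"
    and g: "g \<in> normalizer (AutoGroup A) U"
  shows "ext_group A U \<delta> \<cong> ext_group A U (cochain_act A g \<delta>)"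
proof -
  let ?cj = "\<lambda>v. g \<otimes>\<^bsub>AutoGroup A\<^esub> v \<otimes>\<^bsub>AutoGroup A\<^esub> inv\<^bsub>AutoGroup A\<^esub> g"
  let ?jc = "\<lambda>u. inv\<^bsub>AutoGroup A\<^esub> g \<otimes>\<^bsub>AutoGroup A\<^esub> u \<otimes>\<^bsub>AutoGroup A\<^esub> g"
  have gc: "g \<in> carrier (AutoGroup A)"
    using g Aut.normalizer_iff_conj_image[OF U_subset] by blast
  have cjU: "\<And>v. v \<in> U \<Longrightarrow> ?cj v \<in> U" and jcU: "\<And>u. u \<in> U \<Longrightarrow> ?jc u \<in> U"
    using Aut.normalizer_conj_closed[OF U_subset g] by auto
  have gA: "\<And>x. x \<in> carrier A \<Longrightarrow> g x \<in> carrier A"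
    and gA': "\<And>x. x \<in> carrier A \<Longrightarrow> (inv\<^bsub>AutoGroup A\<^esub> g) x \<in> carrier A"
    using gc by (simp_all add: AutoGroup_apply_closed)
  define \<Phi> where "\<Phi> = (\<lambda>(v, a). (?cj v, g a))"
  have "\<Phi> \<in> hom (ext_group A U \<delta>) (ext_group A U (cochain_act A g \<delta>))"
  proof (rule homI)
    fix x y assume "x \<in> carrier (ext_group A U \<delta>)" "y \<in> carrier (ext_group A U \<delta>)"
    then obtain v a w b where x: "x = (v, a)" "v \<in> U" "a \<in> carrier A"
      and y: "y = (w, b)" "w \<in> U" "b \<in> carrier A" by (auto simp: ext_group_carrier)
    then show "\<Phi> (x \<otimes>\<^bsub>ext_group A U \<delta>\<^esub> y) = \<Phi> x \<otimes>\<^bsub>ext_group A U (cochain_act A g \<delta>)\<^esub> \<Phi> y"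
      using gc by (simp add: \<Phi>_def ext_group_mult cochain_act_def Aut.conj_mult_distrib
          Aut.conj_conj_inv AutoGroup_conj_apply AutoGroup_apply_mult U_aut U_apply_closed \<delta>)
  qed (auto simp: \<Phi>_def ext_group_carrier cjU gA)
  moreover have "bij_betw \<Phi> (carrier (ext_group A U \<delta>)) (carrier (ext_group A U (cochain_act A g \<delta>)))"
    by (rule bij_betw_byWitness[where f' = "\<lambda>(u, c). (?jc u, (inv\<^bsub>AutoGroup A\<^esub> g) c)"])
      (auto simp: \<Phi>_def ext_group_carrier cjU jcU gA gA' gc U_aut Aut.conj_conj_inv Aut.conj_inv_conj
        AutoGroup_apply_inv_left AutoGroup_apply_inv_right)
  ultimately show ?thesis by (auto simp: is_iso_def iso_def)
qed

end

section \<open>Centralized series\<close>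

lemma centralizes_series_if_acts_trivially:
  fixes G :: "'a monoid" (structure)
  assumes "group G" and "\<And>n x. n \<in> N \<Longrightarrow> x \<in> carrier G \<Longrightarrow> n x = x"
  shows "centralizes_series G N"
proof -
  interpret group G by fact
  have fix_one: "\<forall>n\<in>N. n ` {\<one>} \<subseteq> {\<one>}"
    using assms(2) one_closed by (metis image_empty image_insert subset_refl)
  have fix_all: "\<forall>n\<in>N. n ` carrier G \<subseteq> carrier G"
    using assms(2) by (metis image_subset_iff)
  show ?thesis
  proof (cases "carrier G = {\<one>}")
    case True
    then show ?thesis unfolding centralizes_series_def
      using fix_all subgroup_self by (intro exI[of _ 0] exI[of _ "\<lambda>_. carrier G"]) simp
  next
    case False
    define S where "S i = (if i = 1 then carrier G else {\<one>})" for i :: nat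
    have i2: "{1..1+1::nat} = {1, 2}" and i1: "{1..1::nat} = {1}" by auto
    have "\<forall>n\<in>N. \<forall>i\<in>{1..1}. \<forall>x\<in>S i. n x \<otimes> inv x \<in> S (Suc i)"
      using assms(2) by (simp add: i1 S_def) (metis r_inv)
    moreover have "S (Suc 1) \<subset> S 1"
      using False by (auto simp: S_def)
    ultimately show ?thesis unfolding centralizes_series_def
      using fix_one fix_all subgroup_self triv_subgroup
      by (intro exI[of _ 1] exI[of _ S]) (simp add: i2 i1 S_def)
  qed
qed

lemma centralizes_series_two_step:
  fixes G :: "'a monoid" (structure)
  assumes "group G" and C: "subgroup C G" and N: "N \<subseteq> carrier (AutoGroup G)"
    and fix_C: "\<And>n c. n \<in> N \<Longrightarrow> c \<in> C \<Longrightarrow> n c = c"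
    and into_C: "\<And>n x. n \<in> N \<Longrightarrow> x \<in> carrier G \<Longrightarrow> n x \<otimes> inv x \<in> C"
  shows "centralizes_series G N"
proof -
  interpret group G by fact
  have N_apply_closed: "\<And>n x. n \<in> N \<Longrightarrow> x \<in> carrier G \<Longrightarrow> n x \<in> carrier G"
    using N AutoGroup_apply_closed by (metis subsetD)
  have C_sub: "C \<subseteq> carrier G" and one_C: "\<one> \<in> C"
    using subgroup.subset[OF C] subgroup.one_closed[OF C] .
  consider "C = {\<one>}" | "C = carrier G" | "{\<one>} \<subset> C" "C \<subset> carrier G"
    using C_sub one_C by auto
  then show ?thesis
  proof cases
    case 1
    have "n x = x" if "n \<in> N" "x \<in> carrier G" for n x
      using into_C[OF that] N_apply_closed[OF that] that(2) 1 by (simp add: inv_solve_right')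
    then show ?thesis by (rule centralizes_series_if_acts_trivially[OF is_group])
  next
    case 2
    then show ?thesis using fix_C by (intro centralizes_series_if_acts_trivially[OF is_group]) simp
  next
    case 3
    define S where "S i = (if i = 1 then carrier G else if i = 2 then C else {\<one>})" for i :: nat
    have i3: "{1..2+1::nat} = {1, 2, 3}" and i2: "{1..2::nat} = {1, 2}" by auto
    have C_fixed: "n ` C \<subseteq> C" "\<forall>c\<in>C. n c \<otimes> inv c = \<one>" if "n \<in> N" for n
      using fix_C[OF that] C_sub by (auto simp: image_subset_iff)
    have one_fixed: "n \<one> = \<one>" if "n \<in> N" for n
      using N that by (auto simp: AutoGroup_apply_one)
    have "\<forall>i\<in>{1..2+1}. subgroup (S i) G"
      using C subgroup_self triv_subgroup by (simp add: i3 S_def)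
    moreover have "\<forall>i\<in>{1..2}. S (Suc i) \<subset> S i"
      using 3 by (simp add: i2 S_def)
    moreover have "\<forall>n\<in>N. \<forall>i\<in>{1..2+1}. n ` S i \<subseteq> S i"
      using N_apply_closed C_fixed one_fixed by (auto simp: i3 S_def)
    moreover have "\<forall>n\<in>N. \<forall>i\<in>{1..2}. \<forall>x\<in>S i. n x \<otimes> inv x \<in> S (Suc i)"
      using into_C C_fixed by (auto simp: i2 S_def)
    ultimately show ?thesis unfolding centralizes_series_def
      by (intro exI[of _ 2] exI[of _ S]) (simp add: S_def)
  qed
qed

section \<open>The extension defined by a cocycle\<close>

locale cocycle = aut_subgroup +
  fixes \<delta> :: "('a \<Rightarrow> 'a) \<Rightarrow> ('a \<Rightarrow> 'a) \<Rightarrow> 'a"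
  assumes \<delta>_Z2: "\<delta> \<in> Z2 A U"
begin

lemma \<delta>_closed: "u \<in> U \<Longrightarrow> v \<in> U \<Longrightarrow> \<delta> u v \<in> carrier A"
  using \<delta>_Z2 by (simp add: Z2_def)

lemma cocycle_identity: "u \<in> U \<Longrightarrow> v \<in> U \<Longrightarrow> w \<in> U \<Longrightarrow>
  u (\<delta> v w) \<otimes> \<delta> u (v \<otimes>\<^bsub>AutoGroup A\<^esub> w) = \<delta> (u \<otimes>\<^bsub>AutoGroup A\<^esub> v) w \<otimes> \<delta> u v"
  using \<delta>_Z2 by (simp add: Z2_def)

definition e :: 'a where "e = \<delta> \<one>\<^bsub>AutoGroup A\<^esub> \<one>\<^bsub>AutoGroup A\<^esub>"

lemma e_closed: "e \<in> carrier A"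
  unfolding e_def by (rule \<delta>_closed[OF one_in_U one_in_U])

lemma \<delta>_one_left:
  assumes "w \<in> U" shows "\<delta> \<one>\<^bsub>AutoGroup A\<^esub> w = e"
proof -
  have "\<delta> \<one>\<^bsub>AutoGroup A\<^esub> w \<otimes> \<delta> \<one>\<^bsub>AutoGroup A\<^esub> w = \<delta> \<one>\<^bsub>AutoGroup A\<^esub> w \<otimes> e"
    using cocycle_identity[OF one_in_U one_in_U assms] assms
    by (simp add: AutoGroup_one_apply \<delta>_closed one_in_U U_aut e_def)
  then show ?thesis using \<delta>_closed[OF one_in_U assms] e_closed by (metis l_cancel)
qed

lemma \<delta>_one_right:
  assumes "u \<in> U" shows "\<delta> u \<one>\<^bsub>AutoGroup A\<^esub> = u e"
proof -
  have "u e \<otimes> \<delta> u \<one>\<^bsub>AutoGroup A\<^esub> = \<delta> u \<one>\<^bsub>AutoGroup A\<^esub> \<otimes> \<delta> u \<one>\<^bsub>AutoGroup A\<^esub>"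
    using cocycle_identity[OF assms one_in_U one_in_U] assms by (simp add: U_aut e_def)
  then show ?thesis using \<delta>_closed[OF assms one_in_U] e_closed U_apply_closed[OF assms e_closed]
    by (metis r_cancel)
qed

abbreviation G where "G \<equiv> ext_group A U \<delta>"

lemma G_one: "\<one>\<^bsub>G\<^esub> = (\<one>\<^bsub>AutoGroup A\<^esub>, inv e)"
  by (simp add: ext_group_def e_def)

lemma ext_group_is_group: "group G"
proof (rule groupI)
  fix x y assume "x \<in> carrier G" "y \<in> carrier G"
  then show "x \<otimes>\<^bsub>G\<^esub> y \<in> carrier G"
    by (auto simp: ext_group_carrier ext_group_mult U_mult_closed U_apply_closed \<delta>_closed)
next
  show "\<one>\<^bsub>G\<^esub> \<in> carrier G" by (simp add: ext_group_carrier G_one one_in_U e_closed)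
next
  fix x y z assume "x \<in> carrier G" "y \<in> carrier G" "z \<in> carrier G"
  then obtain u a v b w c where x: "x = (u, a)" "u \<in> U" "a \<in> carrier A"
    and y: "y = (v, b)" "v \<in> U" "b \<in> carrier A" and z: "z = (w, c)" "w \<in> U" "c \<in> carrier A"
    by (auto simp: ext_group_carrier)
  have "a \<otimes> u b \<otimes> \<delta> u v \<otimes> (u \<otimes>\<^bsub>AutoGroup A\<^esub> v) c \<otimes> \<delta> (u \<otimes>\<^bsub>AutoGroup A\<^esub> v) w
      = a \<otimes> u b \<otimes> u (v c) \<otimes> (\<delta> (u \<otimes>\<^bsub>AutoGroup A\<^esub> v) w \<otimes> \<delta> u v)"
    using x y z by (simp add: U_mult_apply U_apply_closed U_mult_closed \<delta>_closed m_ac)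
  also have "\<dots> = a \<otimes> u b \<otimes> u (v c) \<otimes> (u (\<delta> v w) \<otimes> \<delta> u (v \<otimes>\<^bsub>AutoGroup A\<^esub> w))"
    using x y z by (simp add: cocycle_identity)
  also have "\<dots> = a \<otimes> u (b \<otimes> v c \<otimes> \<delta> v w) \<otimes> \<delta> u (v \<otimes>\<^bsub>AutoGroup A\<^esub> w)"
    using x y z by (simp add: U_apply_mult U_apply_closed U_mult_closed \<delta>_closed m_assoc)
  finally show "x \<otimes>\<^bsub>G\<^esub> y \<otimes>\<^bsub>G\<^esub> z = x \<otimes>\<^bsub>G\<^esub> (y \<otimes>\<^bsub>G\<^esub> z)"
    using x y z by (simp add: ext_group_mult U_aut Aut.m_assoc)
next
  fix x assume "x \<in> carrier G"
  then obtain u a where x: "x = (u, a)" "u \<in> U" "a \<in> carrier A" by (auto simp: ext_group_carrier)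
  then show "\<one>\<^bsub>G\<^esub> \<otimes>\<^bsub>G\<^esub> x = x"
    by (simp add: G_one ext_group_mult \<delta>_one_left U_aut AutoGroup_one_apply e_closed m_ac
        inv_mult_cancel_left mult_inv_cancel_left)
  define u' where "u' = inv\<^bsub>AutoGroup A\<^esub> u"
  have u': "u' \<in> U" using x u'_def by (simp add: U_inv_closed)
  define y where "y = inv e \<otimes> inv (u' a \<otimes> \<delta> u' u)"
  have "(u', y) \<otimes>\<^bsub>G\<^esub> x = \<one>\<^bsub>G\<^esub>"
    using x u' by (simp add: ext_group_mult G_one y_def u'_def U_aut e_closed U_apply_closed \<delta>_closed
        m_assoc)
  moreover have "(u', y) \<in> carrier G"
    using x u' by (simp add: ext_group_carrier y_def e_closed U_apply_closed \<delta>_closed)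
  ultimately show "\<exists>y\<in>carrier G. y \<otimes>\<^bsub>G\<^esub> x = \<one>\<^bsub>G\<^esub>" by blast
qed

sublocale G: group G by (rule ext_group_is_group)

text \<open>The cocycle need not be normalized: the identity of the extension is
  \<open>(1, inv e)\<close>, so \<open>A\<close> embeds via \<open>a \<mapsto> (1, a \<otimes> inv e)\<close>.\<close>

definition embed :: "'a \<Rightarrow> ('a \<Rightarrow> 'a) \<times> 'a" where "embed a = (\<one>\<^bsub>AutoGroup A\<^esub>, a \<otimes> inv e)"

lemma embed_closed: "a \<in> carrier A \<Longrightarrow> embed a \<in> carrier G"
  by (simp add: embed_def ext_group_carrier one_in_U e_closed)

lemma embed_mult_pair: "w \<in> U \<Longrightarrow> c \<in> carrier A \<Longrightarrow> y \<in> carrier A \<Longrightarrow>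
   embed c \<otimes>\<^bsub>G\<^esub> (w, y) = (w, c \<otimes> y)"
  by (simp add: embed_def ext_group_mult U_aut \<delta>_one_left AutoGroup_one_apply e_closed m_ac
      inv_mult_cancel_left mult_inv_cancel_left)

lemma embed_mult: "a \<in> carrier A \<Longrightarrow> b \<in> carrier A \<Longrightarrow> embed a \<otimes>\<^bsub>G\<^esub> embed b = embed (a \<otimes> b)"
  using embed_mult_pair[OF one_in_U, of a "b \<otimes> inv e"]
  by (simp add: embed_def[of b] embed_def[of "a \<otimes> b"] e_closed m_assoc)

lemma embed_inj: "a \<in> carrier A \<Longrightarrow> b \<in> carrier A \<Longrightarrow> embed a = embed b \<Longrightarrow> a = b"
  by (simp add: embed_def e_closed)

lemma embed_hom: "embed \<in> hom A G"
  by (rule homI) (simp_all add: embed_closed embed_mult)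

lemma embed_inv: "a \<in> carrier A \<Longrightarrow> embed (inv a) = inv\<^bsub>G\<^esub> (embed a)"
  by (rule group_hom.hom_inv)
    (simp_all add: group_hom_def group_hom_axioms_def embed_hom is_group ext_group_is_group)

lemma conj_embed: "u \<in> U \<Longrightarrow> x \<in> carrier A \<Longrightarrow> a \<in> carrier A \<Longrightarrow>
   (u, x) \<otimes>\<^bsub>G\<^esub> embed a = embed (u a) \<otimes>\<^bsub>G\<^esub> (u, x)"
  by (simp add: embed_mult_pair U_apply_closed)
    (simp add: embed_def ext_group_mult U_aut one_in_U \<delta>_one_right e_closed U_apply_mult U_apply_inv
      U_apply_closed m_ac inv_mult_cancel_left mult_inv_cancel_left)

abbreviation A_image where "A_image \<equiv> {\<one>\<^bsub>AutoGroup A\<^esub>} \<times> carrier A"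

lemma A_image_eq: "A_image = embed ` carrier A"
proof
  show "embed ` carrier A \<subseteq> A_image" by (auto simp: embed_def e_closed)
  show "A_image \<subseteq> embed ` carrier A"
  proof
    fix x assume "x \<in> A_image"
    then obtain c where c: "x = (\<one>\<^bsub>AutoGroup A\<^esub>, c)" "c \<in> carrier A" by auto
    then have "x = embed (c \<otimes> e)" by (simp add: embed_def e_closed m_assoc)
    then show "x \<in> embed ` carrier A" using c e_closed by blast
  qed
qed

lemma A_image_comm: "x \<in> A_image \<Longrightarrow> y \<in> A_image \<Longrightarrow> x \<otimes>\<^bsub>G\<^esub> y = y \<otimes>\<^bsub>G\<^esub> x"
  unfolding A_image_eq by (auto simp: embed_mult m_comm)

abbreviation UG where "UG \<equiv> (AutoGroup A)\<lparr>carrier := U\<rparr>"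

lemma fst_group_hom: "group_hom G UG fst"
  by (simp add: group_hom_def group_hom_axioms_def ext_group_is_group Aut.subgroup_imp_group[OF U_subgroup])
    (rule homI; auto simp: ext_group_carrier ext_group_mult)

lemma fst_image: "fst ` carrier G = carrier UG"
  using one_closed by (force simp: ext_group_carrier)

lemma A_image_normal: "A_image \<lhd> G"
proof -
  have "A_image = kernel G UG fst" by (auto simp: kernel_def ext_group_carrier one_in_U)
  then show ?thesis using group_hom.normal_kernel[OF fst_group_hom] by simp
qed

lemma embed_conj:
  assumes "b \<in> carrier G" "a \<in> carrier A"
  shows "b \<otimes>\<^bsub>G\<^esub> embed a \<otimes>\<^bsub>G\<^esub> inv\<^bsub>G\<^esub> b = embed (fst b a)"
proof -
  obtain u x where b: "b = (u, x)" "u \<in> U" "x \<in> carrier A"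
    using assms(1) by (auto simp: ext_group_carrier)
  then show ?thesis
    using conj_embed[OF b(2,3) assms(2)] assms embed_closed U_apply_closed
    by (simp add: G.m_assoc)
qed

lemma abelian_normal_subgroup_le_A_image:
  assumes F: "F_relevant A U" and B: "B \<lhd> G"
    and B_comm: "\<And>x y. x \<in> B \<Longrightarrow> y \<in> B \<Longrightarrow> x \<otimes>\<^bsub>G\<^esub> y = y \<otimes>\<^bsub>G\<^esub> x"
  shows "B \<subseteq> A_image"
proof -
  interpret B: normal B G by (rule B)
  define C where "C = {c \<in> carrier A. embed c \<in> B}"
  have "group_hom A G embed"
    by (simp add: group_hom_def group_hom_axioms_def is_group ext_group_is_group embed_hom)
  then have C: "subgroup C A"
    unfolding C_def by (rule group_hom.subgroup_preimage[OF _ B.subgroup_axioms])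
  have N: "fst ` B \<lhd> UG"
    by (rule B.surj_hom_normal_subgroup[OF fst_group_hom fst_image])
  have B_carrier: "\<And>b. b \<in> B \<Longrightarrow> b \<in> carrier G" using B.subset by blast
  have fst_B: "\<And>b. b \<in> B \<Longrightarrow> fst b \<in> U" using B_carrier by (auto simp: ext_group_carrier)
  have fix_C: "fst b c = c" if b: "b \<in> B" and c: "c \<in> C" for b c
  proof -
    have "embed (fst b c) = embed c \<otimes>\<^bsub>G\<^esub> b \<otimes>\<^bsub>G\<^esub> inv\<^bsub>G\<^esub> b"
      using embed_conj[of b c] b c B_comm[of b "embed c"] by (simp add: C_def B_carrier)
    also have "\<dots> = embed c"
      using b c by (simp add: C_def B_carrier embed_closed G.m_assoc)
    finally show ?thesis
      using embed_inj U_apply_closed fst_B b c by (simp add: C_def)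
  qed
  have into_C: "fst b a \<otimes> inv a \<in> C" if b: "b \<in> B" and a: "a \<in> carrier A" for b a
  proof -
    have "embed (fst b a \<otimes> inv a) = embed (fst b a) \<otimes>\<^bsub>G\<^esub> inv\<^bsub>G\<^esub> embed a"
      using b a by (simp add: embed_mult[symmetric] embed_inv U_apply_closed fst_B)
    also have "\<dots> = b \<otimes>\<^bsub>G\<^esub> embed a \<otimes>\<^bsub>G\<^esub> inv\<^bsub>G\<^esub> b \<otimes>\<^bsub>G\<^esub> inv\<^bsub>G\<^esub> embed a"
      by (simp only: embed_conj[OF B_carrier[OF b] a])
    also have "\<dots> = b \<otimes>\<^bsub>G\<^esub> (embed a \<otimes>\<^bsub>G\<^esub> inv\<^bsub>G\<^esub> b \<otimes>\<^bsub>G\<^esub> inv\<^bsub>G\<^esub> embed a)"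
      using b a by (simp add: embed_closed B_carrier G.m_assoc)
    also have "\<dots> \<in> B"
      using b a by (simp add: B.inv_op_closed2 embed_closed)
    finally show ?thesis using a fst_B[OF b] by (simp add: C_def U_apply_closed)
  qed
  have "centralizes_series A (fst ` B)"
  proof (rule centralizes_series_two_step[OF is_group C])
    show "fst ` B \<subseteq> carrier (AutoGroup A)" using U_subset fst_B by blast
  qed (use fix_C into_C in auto)
  then have "fst ` B = {\<one>\<^bsub>AutoGroup A\<^esub>}"
    using F N unfolding F_relevant_def by blast
  then show ?thesis using B_carrier by (force simp: ext_group_carrier)
qed

end

section \<open>Isomorphisms between extensions\<close>

locale ext_iso = D: cocycle A U \<delta> + L: cocycle A U lam
  for A :: "'a monoid" (structure) and U \<delta> lam +
  fixes \<phi> :: "('a \<Rightarrow> 'a) \<times> 'a \<Rightarrow> ('a \<Rightarrow> 'a) \<times> 'a"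
  assumes \<phi>_iso: "\<phi> \<in> iso D.G L.G"
begin

lemma \<phi>_group_hom: "group_hom D.G L.G \<phi>"
  using \<phi>_iso by (simp add: group_hom_def group_hom_axioms_def iso_def D.ext_group_is_group L.ext_group_is_group)

lemma \<phi>_closed: "x \<in> carrier D.G \<Longrightarrow> \<phi> x \<in> carrier L.G"
  using \<phi>_iso by (auto simp: iso_def hom_in_carrier)

lemma \<phi>_mult: "x \<in> carrier D.G \<Longrightarrow> y \<in> carrier D.G \<Longrightarrow> \<phi> (x \<otimes>\<^bsub>D.G\<^esub> y) = \<phi> x \<otimes>\<^bsub>L.G\<^esub> \<phi> y"
  using \<phi>_iso by (simp add: iso_def hom_mult)

lemma \<phi>_inj: "inj_on \<phi> (carrier D.G)"
  using \<phi>_iso by (simp add: iso_def bij_betw_def)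

lemma \<phi>_image: "\<phi> ` carrier D.G = carrier L.G"
  using \<phi>_iso by (simp add: iso_def bij_betw_def)

lemma \<phi>_A_image_if_F_relevant:
  assumes "finite (carrier A)" and "F_relevant A U"
  shows "\<phi> ` D.A_image = L.A_image"
proof -
  have D_A_image_sub: "D.A_image \<subseteq> carrier D.G" by (auto simp: D.ext_group_carrier D.one_in_U)
  have "\<phi> ` D.A_image \<lhd> L.G"
    by (rule normal.surj_hom_normal_subgroup[OF D.A_image_normal \<phi>_group_hom \<phi>_image])
  moreover have "x \<otimes>\<^bsub>L.G\<^esub> y = y \<otimes>\<^bsub>L.G\<^esub> x" if "x \<in> \<phi> ` D.A_image" "y \<in> \<phi> ` D.A_image" for x y
    using that D_A_image_sub D.A_image_comm by (auto simp: \<phi>_mult[symmetric] subsetD)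
  ultimately have "\<phi> ` D.A_image \<subseteq> L.A_image"
    using L.abelian_normal_subgroup_le_A_image assms(2) by blast
  moreover have "card (\<phi> ` D.A_image) = card L.A_image"
    using card_image[OF inj_on_subset[OF \<phi>_inj D_A_image_sub]] by simp
  ultimately show ?thesis using assms(1) by (simp add: card_subset_eq)
qed

end

locale A_preserving_ext_iso = ext_iso +
  assumes \<phi>_A_image: "\<phi> ` D.A_image = L.A_image"
begin

definition induced_aut :: "'a \<Rightarrow> 'a" where
  "induced_aut = (\<lambda>a\<in>carrier A. snd (\<phi> (D.embed a)) \<otimes>\<^bsub>A\<^esub> L.e)"

lemma \<phi>_embed:
  assumes "a \<in> carrier A"
  shows "induced_aut a \<in> carrier A" "\<phi> (D.embed a) = L.embed (induced_aut a)"
proof -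
  have "\<phi> (D.embed a) \<in> L.A_image"
    using assms \<phi>_A_image D.A_image_eq by blast
  then obtain y where y: "\<phi> (D.embed a) = (\<one>\<^bsub>AutoGroup A\<^esub>, y)" "y \<in> carrier A" by auto
  then have "induced_aut a = y \<otimes>\<^bsub>A\<^esub> L.e" using assms by (simp add: induced_aut_def)
  then show "induced_aut a \<in> carrier A" "\<phi> (D.embed a) = L.embed (induced_aut a)"
    using y L.e_closed by (simp_all add: L.embed_def D.m_assoc)
qed

lemma induced_aut_closed: "a \<in> carrier A \<Longrightarrow> induced_aut a \<in> carrier A"
  by (rule \<phi>_embed(1))

lemma induced_aut_in_AutoGroup: "induced_aut \<in> carrier (AutoGroup A)"
proof (rule AutoGroup_memI)
  show hom: "induced_aut \<in> hom A A"
  proof (rule homI)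
    fix a b assume ab: "a \<in> carrier A" "b \<in> carrier A"
    have "L.embed (induced_aut (a \<otimes>\<^bsub>A\<^esub> b)) = \<phi> (D.embed a \<otimes>\<^bsub>D.G\<^esub> D.embed b)"
      using ab by (simp add: \<phi>_embed D.embed_mult)
    also have "\<dots> = L.embed (induced_aut a \<otimes>\<^bsub>A\<^esub> induced_aut b)"
      using ab by (simp add: \<phi>_mult D.embed_closed \<phi>_embed L.embed_mult)
    finally show "induced_aut (a \<otimes>\<^bsub>A\<^esub> b) = induced_aut a \<otimes>\<^bsub>A\<^esub> induced_aut b"
      using ab by (simp add: L.embed_inj induced_aut_closed)
  qed (rule induced_aut_closed)
  have "inj_on induced_aut (carrier A)"
  proof (rule inj_onI)
    fix a b assume "a \<in> carrier A" "b \<in> carrier A" "induced_aut a = induced_aut b"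
    then show "a = b"
      using inj_onD[OF \<phi>_inj] D.embed_closed D.embed_inj by (metis \<phi>_embed(2))
  qed
  moreover have "carrier A \<subseteq> induced_aut ` carrier A"
  proof
    fix c assume c: "c \<in> carrier A"
    then have "L.embed c \<in> \<phi> ` D.embed ` carrier A"
      using \<phi>_A_image D.A_image_eq L.A_image_eq by blast
    then obtain a where a: "a \<in> carrier A" "L.embed c = L.embed (induced_aut a)"
      using \<phi>_embed(2) by auto
    then show "c \<in> induced_aut ` carrier A"
      using L.embed_inj c induced_aut_closed by blast
  qed
  ultimately show "bij_betw induced_aut (carrier A) (carrier A)"
    using induced_aut_closed by (auto simp: bij_betw_def)
qed (simp add: induced_aut_def)

abbreviation g where "g \<equiv> induced_aut"

text \<open>Conjugation by an element \<open>(u, x)\<close> induces \<open>u\<close> on \<open>A\<close>; transporting this through \<open>\<phi>\<close>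
  shows that the image of \<open>(u, x)\<close> acts on \<open>A\<close> as the conjugate of \<open>u\<close> by \<open>g\<close>.\<close>

lemma fst_\<phi>:
  assumes u: "u \<in> U" and x: "x \<in> carrier A"
  shows "fst (\<phi> (u, x)) = g \<otimes>\<^bsub>AutoGroup A\<^esub> u \<otimes>\<^bsub>AutoGroup A\<^esub> inv\<^bsub>AutoGroup A\<^esub> g"
proof -
  have ux: "(u, x) \<in> carrier D.G" using u x by (simp add: D.ext_group_carrier)
  have s: "fst (\<phi> (u, x)) \<in> U" using \<phi>_closed[OF ux] by (auto simp: D.ext_group_carrier)
  have gc: "g \<in> carrier (AutoGroup A)" by (rule induced_aut_in_AutoGroup)
  have act: "fst (\<phi> (u, x)) (g a) = g (u a)" if a: "a \<in> carrier A" for a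
  proof -
    have "L.embed (fst (\<phi> (u, x)) (g a)) = \<phi> ((u, x) \<otimes>\<^bsub>D.G\<^esub> D.embed a \<otimes>\<^bsub>D.G\<^esub> inv\<^bsub>D.G\<^esub> (u, x))"
      using a ux by (simp add: L.embed_conj[symmetric] \<phi>_closed \<phi>_embed \<phi>_mult D.embed_closed
          group_hom.hom_inv[OF \<phi>_group_hom])
    also have "\<dots> = L.embed (g (u a))"
      using a ux u by (simp add: D.embed_conj \<phi>_embed D.U_apply_closed)
    finally show ?thesis
      using a s u by (simp add: L.embed_inj D.U_apply_closed D.U_apply_closed induced_aut_closed)
  qed
  show ?thesis
  proof (rule AutoGroup_eqI[OF D.U_aut[OF s]])
    fix z assume z: "z \<in> carrier A"
    then show "fst (\<phi> (u, x)) z = (g \<otimes>\<^bsub>AutoGroup A\<^esub> u \<otimes>\<^bsub>AutoGroup A\<^esub> inv\<^bsub>AutoGroup A\<^esub> g) z"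
      using act[of "(inv\<^bsub>AutoGroup A\<^esub> g) z"] gc u
      by (simp add: AutoGroup_mult_apply AutoGroup_apply_closed D.U_aut D.AutoGroup_apply_inv_right)
  qed (use gc u D.U_aut in simp)
qed

lemma induced_aut_in_normalizer: "g \<in> normalizer (AutoGroup A) U"
proof -
  have "(\<lambda>h. g \<otimes>\<^bsub>AutoGroup A\<^esub> h \<otimes>\<^bsub>AutoGroup A\<^esub> inv\<^bsub>AutoGroup A\<^esub> g) ` U = fst ` \<phi> ` carrier D.G"
    by (force simp: D.ext_group_carrier fst_\<phi> image_iff D.one_closed)
  also have "\<dots> = U"
    using \<phi>_image D.one_closed by (force simp: D.ext_group_carrier)
  finally show ?thesis
    using induced_aut_in_AutoGroup D.Aut.normalizer_iff_conj_image[OF D.U_subset] by blast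
qed

abbreviation unconj where "unconj u \<equiv> inv\<^bsub>AutoGroup A\<^esub> g \<otimes>\<^bsub>AutoGroup A\<^esub> u \<otimes>\<^bsub>AutoGroup A\<^esub> g"

lemma unconj_closed: "u \<in> U \<Longrightarrow> unconj u \<in> U"
  by (rule D.Aut.normalizer_conj_closed(2)[OF D.U_subset induced_aut_in_normalizer])

lemma unconj_mult: "u \<in> U \<Longrightarrow> v \<in> U \<Longrightarrow> unconj u \<otimes>\<^bsub>AutoGroup A\<^esub> unconj v = unconj (u \<otimes>\<^bsub>AutoGroup A\<^esub> v)"
  using D.Aut.conj_mult_distrib[of "inv\<^bsub>AutoGroup A\<^esub> g"] induced_aut_in_AutoGroup by (simp add: D.U_aut)

definition lift_cochain :: "('a \<Rightarrow> 'a) \<Rightarrow> 'a" where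
  "lift_cochain u = snd (\<phi> (unconj u, \<one>))"

lemma \<phi>_unconj:
  assumes u: "u \<in> U"
  shows "\<phi> (unconj u, \<one>) = (u, lift_cochain u)" "lift_cochain u \<in> carrier A"
proof -
  have "\<phi> (unconj u, \<one>) \<in> carrier L.G"
    using \<phi>_closed unconj_closed[OF u] by (simp add: D.ext_group_carrier)
  moreover have "fst (\<phi> (unconj u, \<one>)) = u"
    using fst_\<phi>[OF unconj_closed[OF u] D.one_closed] induced_aut_in_AutoGroup u
    by (simp add: D.Aut.conj_inv_conj D.U_aut)
  ultimately show "\<phi> (unconj u, \<one>) = (u, lift_cochain u)" "lift_cochain u \<in> carrier A"
    by (auto simp: lift_cochain_def D.ext_group_carrier prod_eq_iff)
qed

text \<open>Comparing the images under \<open>\<phi>\<close> of both sides of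
  \<open>(u', 1) (v', 1) = (u'v', \<delta> u' v')\<close> with \<open>u' = unconj u\<close>, \<open>v' = unconj v\<close>.\<close>

lemma \<phi>_mult_unconj:
  assumes u: "u \<in> U" and v: "v \<in> U"
  shows "g (\<delta> (unconj u) (unconj v)) \<otimes> lift_cochain (u \<otimes>\<^bsub>AutoGroup A\<^esub> v)
    = lift_cochain u \<otimes> u (lift_cochain v) \<otimes> lam u v"
proof -
  have uv: "u \<otimes>\<^bsub>AutoGroup A\<^esub> v \<in> U" using u v by (rule D.U_mult_closed)
  have \<delta>A: "\<delta> (unconj u) (unconj v) \<in> carrier A" using unconj_closed u v by (simp add: D.\<delta>_closed)
  have lifts: "(unconj w, \<one>) \<in> carrier D.G" if "w \<in> U" for w
    using unconj_closed[OF that] by (simp add: D.ext_group_carrier)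
  have "(u, lift_cochain u) \<otimes>\<^bsub>L.G\<^esub> (v, lift_cochain v) = \<phi> ((unconj u, \<one>) \<otimes>\<^bsub>D.G\<^esub> (unconj v, \<one>))"
    using u v lifts by (simp add: \<phi>_mult \<phi>_unconj)
  also have "(unconj u, \<one>) \<otimes>\<^bsub>D.G\<^esub> (unconj v, \<one>)
      = D.embed (\<delta> (unconj u) (unconj v)) \<otimes>\<^bsub>D.G\<^esub> (unconj (u \<otimes>\<^bsub>AutoGroup A\<^esub> v), \<one>)"
    using unconj_closed u v uv \<delta>A by (simp add: D.ext_group_mult D.U_apply_one unconj_mult D.embed_mult_pair)
  also have "\<phi> \<dots> = L.embed (g (\<delta> (unconj u) (unconj v))) \<otimes>\<^bsub>L.G\<^esub>
      (u \<otimes>\<^bsub>AutoGroup A\<^esub> v, lift_cochain (u \<otimes>\<^bsub>AutoGroup A\<^esub> v))"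
    using uv \<delta>A lifts by (simp add: \<phi>_mult D.embed_closed \<phi>_embed \<phi>_unconj)
  finally show ?thesis
    using uv \<delta>A \<phi>_unconj(2) u v by (simp add: D.ext_group_mult L.embed_mult_pair induced_aut_closed)
qed

lemma cohomologous_cochain_act: "cohomologous A U (cochain_act A g \<delta>) lam"
proof -
  define \<beta> where "\<beta> u v = u (lift_cochain v) \<otimes> inv (lift_cochain (u \<otimes>\<^bsub>AutoGroup A\<^esub> v)) \<otimes> lift_cochain u"
    for u v
  have "\<beta> \<in> B2 A U"
    unfolding B2_def \<beta>_def using \<phi>_unconj(2) by (intro CollectI exI[of _ lift_cochain]) simp
  moreover have "cochain_act A g \<delta> u v = lam u v \<otimes> \<beta> u v" if u: "u \<in> U" and v: "v \<in> U" for u v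
  proof -
    have uv: "u \<otimes>\<^bsub>AutoGroup A\<^esub> v \<in> U" using u v by (rule D.U_mult_closed)
    have "cochain_act A g \<delta> u v = g (\<delta> (unconj u) (unconj v)) \<otimes> lift_cochain (u \<otimes>\<^bsub>AutoGroup A\<^esub> v)
        \<otimes> inv lift_cochain (u \<otimes>\<^bsub>AutoGroup A\<^esub> v)"
      using u v uv unconj_closed \<phi>_unconj(2)
      by (simp add: cochain_act_def induced_aut_closed D.\<delta>_closed D.m_assoc)
    also have "\<dots> = lam u v \<otimes> \<beta> u v"
      unfolding \<phi>_mult_unconj[OF u v] \<beta>_def
      using u v uv \<phi>_unconj(2) L.\<delta>_closed D.U_apply_closed by (simp add: D.m_ac)
    finally show ?thesis .
  qed
  ultimately show ?thesis unfolding cohomologous_def by blast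
qed

end

theorem theorem3p5:
  fixes A :: "'a monoid" and U :: "('a \<Rightarrow> 'a) set"
    and \<delta> lam :: "('a \<Rightarrow> 'a) \<Rightarrow> ('a \<Rightarrow> 'a) \<Rightarrow> 'a"
  assumes "finite (carrier A)"
    and "fin_prod_elem_abelian A"
    and "subgroup U (AutoGroup A)"
    and "F_relevant A U"
    and "\<delta> \<in> Z2 A U" and "lam \<in> Z2 A U"
  shows "ext_group A U \<delta> \<cong> ext_group A U lam \<longleftrightarrow>
    (\<exists>g\<in>normalizer (AutoGroup A) U. cohomologous A U (cochain_act A g \<delta>) lam)"
proof -
  have "comm_group A" using assms(2) unfolding fin_prod_elem_abelian_def by blast
  then interpret D: cocycle A U \<delta> + L: cocycle A U lam
    using assms(3,5,6) by (simp_all add: cocycle_def cocycle_axioms_def aut_subgroup_def aut_subgroup_axioms_def)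
  show ?thesis
  proof
    assume "ext_group A U \<delta> \<cong> ext_group A U lam"
    then obtain \<phi> where "\<phi> \<in> iso (ext_group A U \<delta>) (ext_group A U lam)"
      unfolding is_iso_def by blast
    then interpret ext_iso A U \<delta> lam \<phi> by unfold_locales
    interpret A_preserving_ext_iso A U \<delta> lam \<phi>
      by unfold_locales (rule \<phi>_A_image_if_F_relevant[OF assms(1,4)])
    show "\<exists>g\<in>normalizer (AutoGroup A) U. cohomologous A U (cochain_act A g \<delta>) lam"
      using induced_aut_in_normalizer cohomologous_cochain_act by blast
  next
    assume "\<exists>g\<in>normalizer (AutoGroup A) U. cohomologous A U (cochain_act A g \<delta>) lam"
    then obtain g where g: "g \<in> normalizer (AutoGroup A) U"
      and coh: "cohomologous A U (cochain_act A g \<delta>) lam" by blast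
    have "ext_group A U \<delta> \<cong> ext_group A U (cochain_act A g \<delta>)"
      by (rule D.ext_group_iso_cochain_act[OF D.\<delta>_closed g])
    also have "\<dots> \<cong> ext_group A U lam"
      by (rule D.ext_group_iso_if_cohomologous[OF L.\<delta>_closed coh])
    finally show "ext_group A U \<delta> \<cong> ext_group A U lam" .
  qed
qed

end
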